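(* Let $P=p_1\cdots p_{m+r}$ and $Q=q_1\cdots q_{m+r}$ be lattice paths from $(0,0)$ to $(m,r)$ with $P$ never going above $Q$, such that the region $[P,Q]$ bounded by $P$ and $Q$ is a border strip. Then the set of facets of the lattice path matroid polytope $\mathcal{P}(M[P,Q])$ is in one-to-one correspondence with the disjoint union $\mathcal{D}(R(P,Q))\sqcup\mathcal{C}(R(P,Q))\sqcup\mathcal{S}(R(P,Q))$.
   Context: Lattice paths use steps $E=(1,0)$, $N=(0,1)$, written as words. For $P,Q$ from $(0,0)$ to $(m,r)$ with $P$ never above $Q$, $M[P,Q]$ is the matroid on $[m+r]$ whose bases are the $r$-subsets $B$ such that the lattice path with North steps exactly at positions in $B$ stays in the region between $P$ and $Q$; $\mathcal{P}(M[P,Q])=\mathrm{conv}\{\sum_{b\in B}e_b: B\text{ a basis}\}\subseteq\mathbb{R}^{m+r}$. A border strip is a connected nonempty skew shape containing no $2\times2$ square; $[P,Q]$ is a border strip iff $p_i=q_i$ for $1<i<m+r$, $p_1=q_{m+r}=E$ and $q_1=p_{m+r}=N$. For such $P,Q$ with $m+r>2$ define $R=R(P,Q)=r_1\cdots r_{m+r}$ by $r_i=p_i(=q_i)$ for $1<i<m+r$, $r_1=r_2$, $r_{m+r}=r_{m+r-1}$; if $m+r=2$, $R=NN$. The $i$-deletion of $M=M[P,Q]$ is the restriction $M|_{[m+r]\setminus\{i\}}$; the $i$-contraction is $M/\{i\}\oplus\{i\}$ (isomorphic to the contraction $M/\{i\}$). An outside corner of $[P,Q]$ is a lattice point which is a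 corner $NE$ (North step followed by East step) on $P$ or a corner $EN$ on $Q$. For an outside corner $(p,q)$, the $(p,q)$-direct sum is $M_1\oplus M_2$ where $M_1,M_2$ are the lattice path matroids of the parts of $[P,Q]$ in the lower-left quadrant and the upper-right quadrant centered at $(p,q)$; if $(p,q)$ is the unique outside corner with $p+q=i$ this is called the $i$-direct sum. Define $\mathcal{D}(R)=\{i\text{-deletion}: r_i=E\}$, $\mathcal{C}(R)=\{i\text{-contraction}: r_i=N\}$, $\mathcal{S}(R)=\{i\text{-direct sum}: r_i\neq r_{i+1}\}$. *)

theory Defs
  imports "HOL-Analysis.Analysis"
begin

text \<open>Lattice path steps: E = (1,0), N = (0,1). A path of length n is a list of
  steps; positions are 1-based, so step i of L is L ! (i - 1).\<close>
datatype step = E | N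

definition hgt :: "step list \<Rightarrow> nat \<Rightarrow> nat" where
  "hgt L k = length (filter (\<lambda>s. s = N) (take k L))"

definition pt :: "step list \<Rightarrow> nat \<Rightarrow> nat \<times> nat" where
  "pt L k = (k - hgt L k, hgt L k)"

definition lpath :: "nat \<Rightarrow> nat \<Rightarrow> step list \<Rightarrow> bool" where
  "lpath m r L \<longleftrightarrow> length L = m + r \<and> hgt L (m + r) = r"

definition never_above :: "step list \<Rightarrow> step list \<Rightarrow> bool" where
  "never_above P Q \<longleftrightarrow> (\<forall>k \<le> length P. hgt P k \<le> hgt Q k)"

definition region :: "step list \<Rightarrow> step list \<Rightarrow> (nat \<times> nat) set" where
  "region P Q = {(x, y). x + y \<le> length P \<and> hgt P (x + y) \<le> y \<and> y \<le> hgt Q (x + y)}"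

type_synonym matroid = "nat set \<times> nat set set"

definition ground :: "matroid \<Rightarrow> nat set" where "ground M = fst M"
definition bases :: "matroid \<Rightarrow> nat set set" where "bases M = snd M"

text \<open>Number of North steps of the path encoded by B among positions 1..j.\<close>
definition nb :: "nat set \<Rightarrow> nat \<Rightarrow> nat" where
  "nb B j = card (B \<inter> {1..j})"

text \<open>The lattice path matroid M[P,Q] on [m+r]: bases are the r-subsets B of [m+r]
  whose path (North steps exactly at positions of B) stays between P and Q.\<close>
definition LPM :: "nat \<Rightarrow> nat \<Rightarrow> step list \<Rightarrow> step list \<Rightarrow> matroid" where
  "LPM m r P Q = ({1..m+r},
     {B. B \<subseteq> {1..m+r} \<and> card B = r \<and>
         (\<forall>k \<le> m + r. hgt P k \<le> nb B k \<and> nb B k \<le> hgt Q k)})"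

text \<open>Indicator vector of B in R^(m+r), where the coordinates 1..m+r are labelled
  by a bijection \<iota> onto the finite index type 'n.\<close>
definition indvec :: "(nat \<Rightarrow> 'n::finite) \<Rightarrow> nat set \<Rightarrow> real ^ 'n" where
  "indvec \<iota> B = (\<chi> j. if j \<in> \<iota> ` B then 1 else 0)"

definition matroid_polytope :: "(nat \<Rightarrow> 'n::finite) \<Rightarrow> matroid \<Rightarrow> (real ^ 'n) set" where
  "matroid_polytope \<iota> M = convex hull (indvec \<iota> ` bases M)"

definition mrank :: "matroid \<Rightarrow> nat set \<Rightarrow> nat" where
  "mrank M X = Max ((\<lambda>B. card (B \<inter> X)) ` bases M)"

definition restrict :: "matroid \<Rightarrow> nat set \<Rightarrow> matroid" where
  "restrict M X = (X, {B \<inter> X | B. B \<in> bases M \<and> card (B \<inter> X) = mrank M X})"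

definition contract :: "matroid \<Rightarrow> nat set \<Rightarrow> matroid" where
  "contract M T = (ground M - T, {B - T | B. B \<in> bases M \<and> card (B \<inter> T) = mrank M T})"

definition dsum :: "matroid \<Rightarrow> matroid \<Rightarrow> matroid" where
  "dsum M1 M2 = (ground M1 \<union> ground M2, {B1 \<union> B2 | B1 B2. B1 \<in> bases M1 \<and> B2 \<in> bases M2})"

text \<open>i-deletion M|_{[m+r]-{i}} and i-contraction M/{i} \<oplus> {i}, where {i} is the
  one-element matroid in which i is a coloop.\<close>
definition deletion :: "matroid \<Rightarrow> nat \<Rightarrow> matroid" where
  "deletion M i = restrict M (ground M - {i})"

definition contraction :: "matroid \<Rightarrow> nat \<Rightarrow> matroid" where
  "contraction M i = dsum (contract M {i}) ({i}, {{i}})"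

definition outside_corners :: "step list \<Rightarrow> step list \<Rightarrow> (nat \<times> nat) set" where
  "outside_corners P Q =
     {pt P k | k. 1 \<le> k \<and> k < length P \<and> P ! (k - 1) = N \<and> P ! k = E} \<union>
     {pt Q k | k. 1 \<le> k \<and> k < length Q \<and> Q ! (k - 1) = E \<and> Q ! k = N}"

text \<open>Lower-left part: lattice path matroid on positions 1..p+q of the part of [P,Q]
  in the quadrant x \<le> p, y \<le> q (paths from (0,0) to (p,q)).\<close>
definition LL_part :: "step list \<Rightarrow> step list \<Rightarrow> nat \<times> nat \<Rightarrow> matroid" where
  "LL_part P Q c = (let p = fst c; q = snd c; k = p + q in
     ({1..k}, {B. B \<subseteq> {1..k} \<and> card B = q \<and>
        (\<forall>j \<le> k. (j - nb B j, nb B j) \<in> region P Q \<and> j - nb B j \<le> p \<and> nb B j \<le> q)}))"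

text \<open>Upper-right part: lattice path matroid on positions p+q+1..m+r of the part of
  [P,Q] in the quadrant x \<ge> p, y \<ge> q (paths from (p,q) to (m,r)).\<close>
definition UR_part :: "nat \<Rightarrow> nat \<Rightarrow> step list \<Rightarrow> step list \<Rightarrow> nat \<times> nat \<Rightarrow> matroid" where
  "UR_part m r P Q c = (let p = fst c; q = snd c; k = p + q in
     ({k+1..m+r}, {B. B \<subseteq> {k+1..m+r} \<and> card B = r - q \<and>
        (\<forall>j. k \<le> j \<and> j \<le> m + r \<longrightarrow>
            (let y = q + card (B \<inter> {k+1..j}) in
               (j - y, y) \<in> region P Q \<and> p \<le> j - y \<and> q \<le> y))}))"

definition corner_dsum :: "nat \<Rightarrow> nat \<Rightarrow> step list \<Rightarrow> step list \<Rightarrow> nat \<times> nat \<Rightarrow> matroid" where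
  "corner_dsum m r P Q c = dsum (LL_part P Q c) (UR_part m r P Q c)"

definition i_dsum :: "nat \<Rightarrow> nat \<Rightarrow> step list \<Rightarrow> step list \<Rightarrow> nat \<Rightarrow> matroid" where
  "i_dsum m r P Q i =
     corner_dsum m r P Q (THE c. c \<in> outside_corners P Q \<and> fst c + snd c = i)"

text \<open>[P,Q] is a border strip (characterisation from the paper); n = m + r \<ge> 2.\<close>
definition border_strip :: "step list \<Rightarrow> step list \<Rightarrow> bool" where
  "border_strip P Q \<longleftrightarrow> (let n = length P in
     2 \<le> n \<and> length Q = n \<and>
     (\<forall>i. 1 < i \<and> i < n \<longrightarrow> P ! (i - 1) = Q ! (i - 1)) \<and>
     P ! 0 = E \<and> Q ! (n - 1) = E \<and> Q ! 0 = N \<and> P ! (n - 1) = N)"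

definition Rword :: "step list \<Rightarrow> step list \<Rightarrow> nat \<Rightarrow> step" where
  "Rword P Q i = (let n = length P in
     if n = 2 then N
     else if i \<le> 1 then P ! 1
     else if i \<ge> n then P ! (n - 2)
     else P ! (i - 1))"

definition Dset :: "nat \<Rightarrow> nat \<Rightarrow> step list \<Rightarrow> step list \<Rightarrow> matroid set" where
  "Dset m r P Q = {deletion (LPM m r P Q) i | i. i \<in> {1..m+r} \<and> Rword P Q i = E}"

definition Cset :: "nat \<Rightarrow> nat \<Rightarrow> step list \<Rightarrow> step list \<Rightarrow> matroid set" where
  "Cset m r P Q = {contraction (LPM m r P Q) i | i. i \<in> {1..m+r} \<and> Rword P Q i = N}"

definition Sset :: "nat \<Rightarrow> nat \<Rightarrow> step list \<Rightarrow> step list \<Rightarrow> matroid set" where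
  "Sset m r P Q = {i_dsum m r P Q i | i. i \<in> {1..<m+r} \<and> Rword P Q i \<noteq> Rword P Q (i + 1)}"

end

theory Submission
  imports Defs
begin

text \<open>In the slack coordinates b k = x(1) + ... + x(k) - hgt P k (0 < k < n) the polytope is the
  set of b with 0 \<le> b \<le> 1 and, at every interior step k, b k \<le> b (k - 1) if step k of P is
  North and b (k - 1) \<le> b k otherwise; its vertices are the 0/1 solutions, i.e. the bases.
  Along this fence the bounds 0 \<le> b k and b k \<le> 1 are implied by those at the valleys and peaks
  respectively, and the remaining inequalities are irredundant: an explicit interior point and,
  for each inequality, a point violating only that one show this. They are exactly x k \<ge> 0 for the
  deletions, x k \<le> 1 for the contractions and one bound on x(1) + ... + x(k) for each direct sum.
  The vertices of each of these facets are the bases of the corresponding matroid, so distinct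
  facets give distinct matroids.\<close>

section \<open>Facets of an irredundant polyhedron\<close>

lemma affine_hull_polyhedron_with_interior_point:
  fixes a :: "'i \<Rightarrow> 'a::euclidean_space"
  assumes "finite I" and "affine A"
    and S: "S = A \<inter> {x. \<forall>i\<in>I. a i \<bullet> x \<le> c i}"
    and "z \<in> A" and "\<And>i. i \<in> I \<Longrightarrow> a i \<bullet> z < c i"
  shows "affine hull S = A"
proof -
  define T where "T = (\<Inter>i\<in>I. {x. a i \<bullet> x < c i})"
  have "open T"
    unfolding T_def using \<open>finite I\<close> by (intro open_INT) (auto simp: open_halfspace_lt)
  moreover have "z \<in> A \<inter> T"
    using assms by (auto simp: T_def)
  ultimately have "affine hull (A \<inter> T) = A"
    using \<open>affine A\<close> by (metis affine_hull_affine_Int_open affine_hull_eq empty_iff)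
  moreover have "A \<inter> T \<subseteq> S" "S \<subseteq> A"
    using S by (force simp: T_def)+
  ultimately show ?thesis
    using \<open>affine A\<close> by (metis hull_mono hull_minimal subset_antisym)
qed

lemma facet_of_irredundant_polyhedron_iff:
  fixes a :: "'i \<Rightarrow> 'a::euclidean_space"
  assumes "finite I" and "affine A"
    and S: "S = A \<inter> {x. \<forall>i\<in>I. a i \<bullet> x \<le> c i}"
    and z: "z \<in> A" "\<And>i. i \<in> I \<Longrightarrow> a i \<bullet> z < c i"
    and irredundant: "\<And>i. i \<in> I \<Longrightarrow> \<exists>y\<in>A. c i < a i \<bullet> y \<and> (\<forall>j\<in>I. j \<noteq> i \<longrightarrow> a j \<bullet> y \<le> c j)"
  shows "F facet_of S \<longleftrightarrow> (\<exists>i\<in>I. F = S \<inter> {x. a i \<bullet> x = c i})"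
proof -
  have hull: "affine hull S = A"
    by (rule affine_hull_polyhedron_with_interior_point[OF \<open>finite I\<close> \<open>affine A\<close> S z])
  define H where "H i = {x. a i \<bullet> x \<le> c i}" for i
  have separate: "\<exists>y\<in>A. y \<notin> H i \<and> (\<forall>j\<in>I - {i}. y \<in> H j)" if "i \<in> I" for i
    using irredundant[OF that] by (auto simp: H_def not_le)
  have "inj_on H I"
  proof (rule inj_onI, rule ccontr)
    fix i j assume "i \<in> I" "j \<in> I" "H i = H j" "i \<noteq> j"
    then show False using separate[of i] by auto
  qed
  define i_of where "i_of h = inv_into I H h" for h
  have i_of: "i_of (H i) = i" if "i \<in> I" for i
    using \<open>inj_on H I\<close> that by (simp add: i_of_def)
  have seq: "S = affine hull S \<inter> \<Inter>(H ` I)"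
    using S hull by (auto simp: H_def)
  have "F facet_of S \<longleftrightarrow> (\<exists>h. h \<in> H ` I \<and> F = S \<inter> {x. a (i_of h) \<bullet> x = c (i_of h)})"
  proof (rule facet_of_polyhedron_explicit)
    show "finite (H ` I)" using \<open>finite I\<close> by simp
    show "S = affine hull S \<inter> \<Inter>(H ` I)" by (rule seq)
    show "a (i_of h) \<noteq> 0 \<and> h = {x. a (i_of h) \<bullet> x \<le> c (i_of h)}" if h: "h \<in> H ` I" for h
    proof -
      obtain i where i: "i \<in> I" "h = H i" using h by blast
      then have "a i \<noteq> 0" using irredundant[OF i(1)] z(2)[OF i(1)] by auto
      then show ?thesis using i i_of by (simp add: H_def)
    qed
    show "S \<subset> affine hull S \<inter> \<Inter>F'" if F': "F' \<subset> H ` I" for F'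
    proof -
      obtain i where i: "i \<in> I" "H i \<notin> F'" using F' by blast
      then obtain y where "y \<in> A" "y \<notin> H i" "\<forall>j\<in>I - {i}. y \<in> H j"
        using separate by blast
      then have "y \<in> affine hull S \<inter> \<Inter>F'" "y \<notin> S"
        using F' i hull seq by (fastforce, auto)
      then show ?thesis using seq F' by blast
    qed
  qed
  then show ?thesis
    by (auto simp: i_of)
qed

lemma inj_on_faces_of_irredundant_polyhedron:
  fixes a :: "'i \<Rightarrow> 'a::euclidean_space"
  assumes "affine A"
    and S: "S = A \<inter> {x. \<forall>i\<in>I. a i \<bullet> x \<le> c i}"
    and z: "z \<in> A" "\<And>i. i \<in> I \<Longrightarrow> a i \<bullet> z < c i"
    and irredundant: "\<And>i. i \<in> I \<Longrightarrow> \<exists>y\<in>A. c i < a i \<bullet> y \<and> (\<forall>j\<in>I. j \<noteq> i \<longrightarrow> a j \<bullet> y \<le> c j)"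
  shows "inj_on (\<lambda>i. S \<inter> {x. a i \<bullet> x = c i}) I"
proof (rule inj_onI, rule ccontr)
  fix i j assume ij: "i \<in> I" "j \<in> I" and same_face: "S \<inter> {x. a i \<bullet> x = c i} = S \<inter> {x. a j \<bullet> x = c j}"
    and "i \<noteq> j"
  obtain y where y: "y \<in> A" "c i < a i \<bullet> y" "\<forall>k\<in>I. k \<noteq> i \<longrightarrow> a k \<bullet> y \<le> c k"
    using irredundant[OF ij(1)] by blast
  \<comment> \<open>The segment from the interior point z to y leaves S exactly through the face of i.\<close>
  define t where "t = (c i - a i \<bullet> z) / (a i \<bullet> y - a i \<bullet> z)"
  have "a i \<bullet> z < c i" using z ij by auto
  then have t: "0 < t" "t < 1" "t * (a i \<bullet> y - a i \<bullet> z) = c i - a i \<bullet> z"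
    using y(2) by (auto simp: t_def field_simps)
  define p where "p = (1 - t) *\<^sub>R z + t *\<^sub>R y"
  have ap: "a k \<bullet> p = (1 - t) * (a k \<bullet> z) + t * (a k \<bullet> y)" for k
    by (simp add: p_def inner_add_right)
  have "a i \<bullet> p = c i"
    using t(3) by (simp add: ap algebra_simps)
  moreover have "a k \<bullet> p < c k" if "k \<in> I" "k \<noteq> i" for k
  proof -
    have "(1 - t) * (a k \<bullet> z) < (1 - t) * c k" "t * (a k \<bullet> y) \<le> t * c k"
      using z(2)[OF that(1)] y(3) that t by auto
    then show ?thesis by (simp add: ap algebra_simps)
  qed
  moreover have "p \<in> A"
    using \<open>affine A\<close> y(1) z(1) by (simp add: p_def affine_alt)
  ultimately have "p \<in> S \<inter> {x. a i \<bullet> x = c i}" "a j \<bullet> p < c j"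
    using S ij \<open>i \<noteq> j\<close> by (auto simp: order.order_iff_strict)
  then show False using same_face by auto
qed

lemma facets_of_irredundant_polyhedron:
  fixes a :: "'i \<Rightarrow> 'a::euclidean_space"
  assumes "finite I" and "affine A"
    and "S = A \<inter> {x. \<forall>i\<in>I. a i \<bullet> x \<le> c i}"
    and "z \<in> A" "\<And>i. i \<in> I \<Longrightarrow> a i \<bullet> z < c i"
    and "\<And>i. i \<in> I \<Longrightarrow> \<exists>y\<in>A. c i < a i \<bullet> y \<and> (\<forall>j\<in>I. j \<noteq> i \<longrightarrow> a j \<bullet> y \<le> c j)"
  shows "bij_betw (\<lambda>i. S \<inter> {x. a i \<bullet> x = c i}) I {F. F facet_of S}"
  using inj_on_faces_of_irredundant_polyhedron[OF assms(2-)] facet_of_irredundant_polyhedron_iff[OF assms]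
  by (auto simp: bij_betw_def)

lemma convex_hull_Int_supporting_hyperplane:
  fixes V :: "'a::euclidean_space set"
  assumes "finite V" and le: "\<And>v. v \<in> V \<Longrightarrow> a \<bullet> v \<le> c"
  shows "convex hull V \<inter> {x. a \<bullet> x = c} = convex hull (V \<inter> {x. a \<bullet> x = c})"
proof
  have "convex hull V \<subseteq> {x. a \<bullet> x \<le> c}"
    using le by (intro hull_minimal) (auto simp: convex_halfspace_le)
  then have "(convex hull V \<inter> {x. a \<bullet> x = c}) face_of convex hull V"
    by (intro face_of_Int_supporting_hyperplane_le) auto
  then obtain V' where V': "V' \<subseteq> V" "convex hull V \<inter> {x. a \<bullet> x = c} = convex hull V'"
    using face_of_convex_hull_subset finite_imp_compact \<open>finite V\<close> by metis
  then have "V' \<subseteq> V \<inter> {x. a \<bullet> x = c}"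
    using hull_subset[of V' convex] by auto
  then show "convex hull V \<inter> {x. a \<bullet> x = c} \<subseteq> convex hull (V \<inter> {x. a \<bullet> x = c})"
    using V'(2) by (simp add: hull_mono)
  show "convex hull (V \<inter> {x. a \<bullet> x = c}) \<subseteq> convex hull V \<inter> {x. a \<bullet> x = c}"
    by (simp add: hull_mono hull_minimal convex_hyperplane)
qed

section \<open>Contracting an element of a basis\<close>

lemma mrank_singleton:
  assumes "finite (bases M)" and "B0 \<in> bases M" and "k \<in> B0"
  shows "mrank M {k} = 1"
  unfolding mrank_def
proof (rule Max_eqI)
  show "finite ((\<lambda>B. card (B \<inter> {k})) ` bases M)" using assms(1) by simp
  show "c \<le> 1" if "c \<in> (\<lambda>B. card (B \<inter> {k})) ` bases M" for c
    using that by (auto simp: card_le_Suc0_iff_eq)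
  show "1 \<in> (\<lambda>B. card (B \<inter> {k})) ` bases M"
    using assms(2,3) by (intro image_eqI[of _ _ B0]) (auto simp: Int_absorb1)
qed

lemma bases_contraction:
  assumes "finite (bases M)" and "B0 \<in> bases M" and "k \<in> B0"
  shows "bases (contraction M k) = {B \<in> bases M. k \<in> B}"
proof -
  have "card (B \<inter> {k}) = 1 \<longleftrightarrow> k \<in> B" for B :: "nat set"
    by (cases "k \<in> B") (auto simp: Int_absorb1)
  then have contract: "bases (contract M {k}) = (\<lambda>B. B - {k}) ` {B \<in> bases M. k \<in> B}"
    using mrank_singleton[OF assms] by (auto simp: contract_def bases_def)
  have "bases (contraction M k) = (\<lambda>B. B \<union> {k}) ` bases (contract M {k})"
    by (auto simp: contraction_def dsum_def bases_def)
  also have "\<dots> = (\<lambda>B. B - {k} \<union> {k}) ` {B \<in> bases M. k \<in> B}"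
    by (simp add: contract image_image)
  also have "\<dots> = id ` {B \<in> bases M. k \<in> B}"
    by (rule image_cong) auto
  finally show ?thesis by simp
qed

section \<open>Lattice paths and bases of lattice path matroids\<close>

lemma step_neq_N_iff: "s \<noteq> N \<longleftrightarrow> s = E"
  by (cases s) auto

lemma hgt_0 [simp]: "hgt L 0 = 0"
  by (simp add: hgt_def)

lemma hgt_Suc: "k < length L \<Longrightarrow> hgt L (Suc k) = hgt L k + of_bool (L ! k = N)"
  by (simp add: hgt_def take_Suc_conv_app_nth)

lemma hgt_le: "hgt L k \<le> k"
  unfolding hgt_def by (metis dual_order.trans length_filter_le length_take min.cobounded2)

lemma hgt_mono: "j \<le> k \<Longrightarrow> hgt L j \<le> hgt L k"
  unfolding hgt_def by (metis le_add_diff_inverse take_add filter_append length_append le_add1)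

lemma pt_sum: "fst (pt L j) + snd (pt L j) = j"
  using hgt_le[of L j] by (simp add: pt_def)

lemma nb_mono: "j \<le> k \<Longrightarrow> nb B j \<le> nb B k"
  unfolding nb_def by (intro card_mono) auto

lemma nb_le: "nb B j \<le> j"
  unfolding nb_def by (metis card_atLeastAtMost card_mono diff_Suc_1 finite_atLeastAtMost inf_le2)

lemma nb_split: "j \<le> k \<Longrightarrow> nb B k = nb B j + card (B \<inter> {j+1..k})"
proof -
  assume "j \<le> k"
  then have "B \<inter> {1..k} = (B \<inter> {1..j}) \<union> (B \<inter> {j+1..k})" by auto
  then show ?thesis unfolding nb_def by (simp add: card_Un_disjoint disjoint_iff)
qed

lemma card_Int_interval_le: "card (B \<inter> {j+1..k}) \<le> k - j"
  by (metis card_atLeastAtMost card_mono diff_Suc_Suc finite_atLeastAtMost inf_le2 Suc_eq_plus1)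

lemma nb_le_add_diff: "j \<le> k \<Longrightarrow> nb B k \<le> nb B j + (k - j)"
  using nb_split[of j k B] card_Int_interval_le[of B j k] by simp

lemma nb_Suc: "nb B (Suc k) = nb B k + of_bool (Suc k \<in> B)"
  using nb_split[of k "Suc k" B] by (simp add: Int_insert_left)

lemma region_iff: "y \<le> j \<Longrightarrow> (j - y, y) \<in> region P Q \<longleftrightarrow> j \<le> length P \<and> hgt P j \<le> y \<and> y \<le> hgt Q j"
  by (simp add: region_def)

lemma bases_LL_part:
  assumes "q \<le> i" and "i \<le> length P"
  shows "B \<in> bases (LL_part P Q (i - q, q)) \<longleftrightarrow>
    B \<subseteq> {1..i} \<and> nb B i = q \<and> (\<forall>j\<le>i. hgt P j \<le> nb B j \<and> nb B j \<le> hgt Q j)"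
proof -
  have path_bounds: "j - nb B j \<le> i - q \<and> nb B j \<le> q" if "j \<le> i" "nb B i = q" for j
    using nb_le_add_diff[OF that(1), of B] nb_mono[OF that(1), of B] nb_le[of B j] that by linarith
  have "card B = nb B i" if "B \<subseteq> {1..i}"
    using that by (simp add: nb_def Int_absorb2)
  then show ?thesis
    using assms path_bounds nb_le[of B]
    by (auto simp: LL_part_def bases_def Let_def region_iff)
qed

lemma bases_UR_part:
  assumes "q \<le> i" and "length P = m + r"
  shows "B \<in> bases (UR_part m r P Q (i - q, q)) \<longleftrightarrow>
    B \<subseteq> {i+1..m+r} \<and> card B = r - q \<and>
    (\<forall>j. i \<le> j \<and> j \<le> m + r \<longrightarrow> hgt P j \<le> q + card (B \<inter> {i+1..j}) \<and> q + card (B \<inter> {i+1..j}) \<le> hgt Q j)"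
proof -
  have "q + card (B \<inter> {i+1..j}) \<le> j \<and> i - q \<le> j - (q + card (B \<inter> {i+1..j}))" if "i \<le> j" for j
    using card_Int_interval_le[of B i j] assms(1) that by linarith
  then show ?thesis
    using assms by (auto simp: UR_part_def bases_def Let_def region_iff)
qed

lemma bases_LPM_iff:
  "B \<in> bases (LPM m r P Q) \<longleftrightarrow>
     B \<subseteq> {1..m+r} \<and> card B = r \<and> (\<forall>k \<le> m + r. hgt P k \<le> nb B k \<and> nb B k \<le> hgt Q k)"
  by (simp add: LPM_def bases_def)

lemma nb_Int_prefix: "j \<le> i \<Longrightarrow> nb (B \<inter> {1..i}) j = nb B j"
  by (simp add: nb_def Int_assoc Int_absorb2)

lemma nb_split_suffix:
  "i \<le> j \<Longrightarrow> j \<le> t \<Longrightarrow> nb B j = nb B i + card (B \<inter> {i+1..t} \<inter> {i+1..j})"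
  using nb_split[of i j B] by (simp add: Int_assoc Int_absorb2)

lemma union_mem_bases_LPM:
  assumes lenP: "length P = m + r" and "q \<le> i" and "i \<le> m + r" and "q \<le> r"
    and B1: "B1 \<in> bases (LL_part P Q (i - q, q))" and B2: "B2 \<in> bases (UR_part m r P Q (i - q, q))"
  shows "B1 \<union> B2 \<in> bases (LPM m r P Q) \<and> nb (B1 \<union> B2) i = q"
proof -
  note parts = bases_LL_part[OF \<open>q \<le> i\<close>] bases_UR_part[OF \<open>q \<le> i\<close> lenP] lenP \<open>i \<le> m + r\<close>
  define B where "B = B1 \<union> B2"
  have sub1: "B1 \<subseteq> {1..i}" and sub2: "B2 \<subseteq> {i+1..m+r}"
    using B1 B2 by (simp_all add: parts)
  then have B1_eq: "B1 = B \<inter> {1..i}" and B2_eq: "B2 = B \<inter> {i+1..m+r}" and sub: "B \<subseteq> {1..m+r}"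
    using \<open>i \<le> m + r\<close> by (auto simp: B_def)
  have nb_i: "nb B i = q"
    using B1 nb_Int_prefix[of i i B] B1_eq by (simp add: parts)
  have "B1 \<inter> B2 \<subseteq> {1..i} \<inter> {i+1..m+r}"
    using sub1 sub2 by blast
  then have "B1 \<inter> B2 = {}" by auto
  moreover have "finite B1" "finite B2"
    using sub1 sub2 by (auto intro: finite_subset)
  ultimately have "card B = card B1 + card B2"
    unfolding B_def by (simp add: card_Un_disjoint)
  moreover have "card B1 = q"
    using B1 by (auto simp: parts nb_def Int_absorb2)
  ultimately have "card B = r"
    using B2 \<open>q \<le> r\<close> by (simp add: parts)
  moreover have "hgt P j \<le> nb B j \<and> nb B j \<le> hgt Q j" if "j \<le> m + r" for j
  proof (cases "j \<le> i")
    case True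
    have "hgt P j \<le> nb B1 j \<and> nb B1 j \<le> hgt Q j"
      using B1 True by (simp add: parts)
    then show ?thesis using nb_Int_prefix[OF True, of B] B1_eq by simp
  next
    case False
    have "hgt P j \<le> q + card (B2 \<inter> {i+1..j}) \<and> q + card (B2 \<inter> {i+1..j}) \<le> hgt Q j"
      using B2 False that by (simp add: parts)
    then show ?thesis using nb_split_suffix[of i j "m + r" B] False that nb_i B2_eq by simp
  qed
  ultimately show ?thesis
    using sub nb_i by (simp add: bases_LPM_iff B_def)
qed

lemma Int_mem_bases_parts:
  assumes lenP: "length P = m + r" and "q \<le> i" and "i \<le> m + r"
    and B: "B \<in> bases (LPM m r P Q)" "nb B i = q"
  shows "B \<inter> {1..i} \<in> bases (LL_part P Q (i - q, q)) \<and>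
    B \<inter> {i+1..m+r} \<in> bases (UR_part m r P Q (i - q, q))"
proof -
  note parts = bases_LL_part[OF \<open>q \<le> i\<close>] bases_UR_part[OF \<open>q \<le> i\<close> lenP] lenP \<open>i \<le> m + r\<close>
  have sub: "B \<subseteq> {1..m+r}" and "card B = r"
    and bounds: "\<And>j. j \<le> m + r \<Longrightarrow> hgt P j \<le> nb B j \<and> nb B j \<le> hgt Q j"
    using B by (auto simp: bases_LPM_iff)
  have "card B = card (B \<inter> {1..i}) + card (B \<inter> {i+1..m+r})"
    using sub by (subst card_Un_disjoint[symmetric]) (auto intro!: arg_cong[where f = card])
  then have "card (B \<inter> {i+1..m+r}) = r - q"
    using \<open>card B = r\<close> B(2) by (simp add: nb_def)
  moreover have "nb (B \<inter> {1..i}) i = q"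
    using nb_Int_prefix[of i i B] B(2) by simp
  moreover have "hgt P j \<le> nb (B \<inter> {1..i}) j \<and> nb (B \<inter> {1..i}) j \<le> hgt Q j" if "j \<le> i" for j
    using bounds[of j] nb_Int_prefix[OF that, of B] that \<open>i \<le> m + r\<close> by simp
  moreover have "hgt P j \<le> q + card (B \<inter> {i+1..m+r} \<inter> {i+1..j}) \<and>
      q + card (B \<inter> {i+1..m+r} \<inter> {i+1..j}) \<le> hgt Q j" if "i \<le> j" "j \<le> m + r" for j
    using bounds[of j] nb_split_suffix[OF that, of B] B(2) that by simp
  ultimately show ?thesis
    by (simp add: parts)
qed

lemma bases_corner_dsum:
  assumes P: "lpath m r P" and Q: "lpath m r Q"
    and "i \<le> m + r" and "q \<le> i" and "q \<le> hgt Q i"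
  shows "bases (corner_dsum m r P Q (i - q, q)) = {B \<in> bases (LPM m r P Q). nb B i = q}"
proof -
  have lenP: "length P = m + r" and "hgt Q (m + r) = r"
    using P Q by (auto simp: lpath_def)
  then have "q \<le> r"
    using hgt_mono[OF \<open>i \<le> m + r\<close>, of Q] \<open>q \<le> hgt Q i\<close> by simp
  have dsum_eq: "bases (corner_dsum m r P Q (i - q, q)) =
      {B1 \<union> B2 | B1 B2. B1 \<in> bases (LL_part P Q (i - q, q)) \<and> B2 \<in> bases (UR_part m r P Q (i - q, q))}"
    by (simp add: corner_dsum_def dsum_def bases_def)
  show ?thesis
  proof (intro set_eqI iffI)
    fix B assume "B \<in> bases (corner_dsum m r P Q (i - q, q))"
    then have "\<exists>B1 B2. B = B1 \<union> B2 \<and> B1 \<in> bases (LL_part P Q (i - q, q)) \<and>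
        B2 \<in> bases (UR_part m r P Q (i - q, q))"
      unfolding dsum_eq by (simp only: mem_Collect_eq)
    then show "B \<in> {B \<in> bases (LPM m r P Q). nb B i = q}"
      using union_mem_bases_LPM[OF lenP \<open>q \<le> i\<close> \<open>i \<le> m + r\<close> \<open>q \<le> r\<close>] by auto
  next
    fix B assume "B \<in> {B \<in> bases (LPM m r P Q). nb B i = q}"
    then have B: "B \<in> bases (LPM m r P Q)" "nb B i = q" by simp_all
    then have "B = (B \<inter> {1..i}) \<union> (B \<inter> {i+1..m+r})"
      by (auto simp: bases_LPM_iff)
    then show "B \<in> bases (corner_dsum m r P Q (i - q, q))"
      using Int_mem_bases_parts[OF lenP \<open>q \<le> i\<close> \<open>i \<le> m + r\<close> B] unfolding dsum_eq mem_Collect_eq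
      by blast
  qed
qed

lemma fence_lower_bound:
  fixes b :: "nat \<Rightarrow> real" and down :: "nat \<Rightarrow> bool"
  assumes fence: "\<And>k. 2 \<le> k \<Longrightarrow> k < n \<Longrightarrow> if down k then b k \<le> b (k - 1) else b (k - 1) \<le> b k"
    and valley: "\<And>q. 1 \<le> q \<Longrightarrow> q < n \<Longrightarrow> (2 \<le> q \<longrightarrow> down q) \<Longrightarrow> (q + 2 \<le> n \<longrightarrow> \<not> down (q + 1)) \<Longrightarrow> lo \<le> b q"
    and "1 \<le> k" and "k < n"
  shows "lo \<le> b k"
proof -
  have downhill: "lo \<le> b k" if "k \<le> n - 1" "1 \<le> k" "2 \<le> k \<longrightarrow> down k" for k
    using that
  proof (induction k rule: inc_induct)
    case base
    then show ?case using valley[of "n - 1"] by simp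
  next
    case (step k)
    show ?case
    proof (cases "down (Suc k)")
      case True
      then have "b (Suc k) \<le> b k" using fence[of "Suc k"] step by auto
      then show ?thesis using step True by simp
    next
      case False
      then show ?thesis using valley[of k] step by simp
    qed
  qed
  show ?thesis
    using assms(3,4)
  proof (induction k rule: nat_induct_at_least)
    case base
    then show ?case using downhill[of 1] by simp
  next
    case (Suc k)
    show ?case
    proof (cases "down (Suc k)")
      case True
      then show ?thesis using downhill[of "Suc k"] Suc by simp
    next
      case False
      then have "b k \<le> b (Suc k)" using fence[of "Suc k"] Suc by auto
      then show ?thesis using Suc by simp
    qed
  qed
qed

section \<open>The polytope of a border strip in slack coordinates\<close>

datatype slack_ineq = Lower nat | Upper nat | Fence nat

locale border_strip_lpm =
  fixes m r :: nat and P Q :: "step list" and \<iota> :: "nat \<Rightarrow> 'n::finite"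
  assumes lpath_P: "lpath m r P" and lpath_Q: "lpath m r Q" and strip: "border_strip P Q"
    and bij_\<iota>: "bij_betw \<iota> {1..m+r} (UNIV :: 'n set)"
begin

abbreviation n :: nat where "n \<equiv> m + r"

abbreviation lpm :: matroid where "lpm \<equiv> LPM m r P Q"

abbreviation polytope :: "(real ^ 'n) set" where "polytope \<equiv> matroid_polytope \<iota> lpm"

definition north :: "nat \<Rightarrow> bool" where "north k \<longleftrightarrow> P ! (k - 1) = N"

lemma length_P: "length P = n" and length_Q: "length Q = n"
  and hgt_P_n: "hgt P n = r" and hgt_Q_n: "hgt Q n = r"
  using lpath_P lpath_Q by (auto simp: lpath_def)

lemma n_ge_2: "2 \<le> n"
  using strip length_P by (simp add: border_strip_def Let_def)

lemma not_north_1 [simp]: "\<not> north 1"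
  and north_n [simp]: "north n"
  using strip length_P by (auto simp: border_strip_def Let_def north_def)

lemma Q_nth_eq_P_nth:
  assumes "1 \<le> k" and "k + 1 < n"
  shows "Q ! k = P ! k"
proof -
  have "\<forall>i. 1 < i \<and> i < n \<longrightarrow> P ! (i - 1) = Q ! (i - 1)"
    using strip length_P by (simp add: border_strip_def Let_def)
  from this[rule_format, of "k + 1"] show ?thesis using assms by simp
qed

lemma hgt_P_Suc: "k < n \<Longrightarrow> hgt P (Suc k) = hgt P k + of_bool (north (Suc k))"
  by (simp add: hgt_Suc length_P north_def)

lemma hgt_Q: "1 \<le> k \<Longrightarrow> k < n \<Longrightarrow> hgt Q k = hgt P k + 1"
proof (induction k rule: nat_induct_at_least)
  case base
  have "Q ! 0 = N" "P ! 0 = E" using strip length_P by (auto simp: border_strip_def Let_def)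
  moreover have "0 < m \<or> 0 < r" using n_ge_2 by linarith
  ultimately show ?case using hgt_Suc[of 0 Q] hgt_Suc[of 0 P] length_P length_Q by simp
next
  case (Suc k)
  then show ?case using hgt_Suc[of k Q] hgt_Suc[of k P] Q_nth_eq_P_nth[of k] length_P length_Q by simp
qed

lemma bases_lpm_iff:
  "B \<in> bases lpm \<longleftrightarrow> B \<subseteq> {1..n} \<and> card B = r \<and>
     (\<forall>k. 1 \<le> k \<and> k < n \<longrightarrow> hgt P k \<le> nb B k \<and> nb B k \<le> hgt P k + 1)"
proof -
  have "(\<forall>k \<le> n. hgt P k \<le> nb B k \<and> nb B k \<le> hgt Q k) \<longleftrightarrow>
      (\<forall>k. 1 \<le> k \<and> k < n \<longrightarrow> hgt P k \<le> nb B k \<and> nb B k \<le> hgt P k + 1)"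
    if "B \<subseteq> {1..n}" "card B = r"
  proof
    assume all: "\<forall>k \<le> n. hgt P k \<le> nb B k \<and> nb B k \<le> hgt Q k"
    show "\<forall>k. 1 \<le> k \<and> k < n \<longrightarrow> hgt P k \<le> nb B k \<and> nb B k \<le> hgt P k + 1"
    proof (intro allI impI)
      fix k assume "1 \<le> k \<and> k < n"
      then show "hgt P k \<le> nb B k \<and> nb B k \<le> hgt P k + 1"
        using all[rule_format, of k] hgt_Q[of k] by simp
    qed
  next
    assume mid: "\<forall>k. 1 \<le> k \<and> k < n \<longrightarrow> hgt P k \<le> nb B k \<and> nb B k \<le> hgt P k + 1"
    have "nb B n = r"
      using that by (simp add: nb_def Int_absorb2)
    show "\<forall>k \<le> n. hgt P k \<le> nb B k \<and> nb B k \<le> hgt Q k"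
    proof (intro allI impI)
      fix k assume "k \<le> n"
      then consider "k = 0" | "1 \<le> k \<and> k < n" | "k = n" by linarith
      then show "hgt P k \<le> nb B k \<and> nb B k \<le> hgt Q k"
        using mid hgt_Q \<open>nb B n = r\<close> by cases (auto simp: nb_def hgt_P_n hgt_Q_n)
    qed
  qed
  then show ?thesis
    unfolding bases_LPM_iff by blast
qed

lemma finite_bases_lpm: "finite (bases lpm)"
proof (rule finite_subset)
  show "bases lpm \<subseteq> Pow {1..n}"
    using bases_lpm_iff by blast
qed simp

definition coord :: "real ^ 'n \<Rightarrow> nat \<Rightarrow> real" where "coord v k = v $ \<iota> k"

definition psum :: "real ^ 'n \<Rightarrow> nat \<Rightarrow> real" where "psum v k = (\<Sum>j=1..k. coord v j)"

lemma vec_eq_if_coord_eq: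
  assumes "\<And>k. k \<in> {1..n} \<Longrightarrow> coord v k = coord w k"
  shows "v = w"
proof (rule vec_eq_iff[THEN iffD2], rule allI)
  fix j :: 'n
  obtain k where "k \<in> {1..n}" "j = \<iota> k" using bij_\<iota> by (metis UNIV_I bij_betw_def imageE)
  then show "v $ j = w $ j" using assms by (simp add: coord_def)
qed

lemma coord_indvec: "B \<subseteq> {1..n} \<Longrightarrow> k \<in> {1..n} \<Longrightarrow> coord (indvec \<iota> B) k = of_bool (k \<in> B)"
  using inj_on_image_mem_iff[of \<iota> "{1..n}"] bij_\<iota> by (auto simp: coord_def indvec_def bij_betw_def)

lemma inner_indvec: "K \<subseteq> {1..n} \<Longrightarrow> indvec \<iota> K \<bullet> v = (\<Sum>k\<in>K. coord v k)"
proof -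
  assume K: "K \<subseteq> {1..n}"
  have "indvec \<iota> K \<bullet> v = (\<Sum>j\<in>UNIV. (if j \<in> \<iota> ` K then 1 else 0) * v $ j)"
    by (simp add: inner_vec_def indvec_def)
  also have "\<dots> = (\<Sum>j\<in>UNIV. if j \<in> \<iota> ` K then v $ j else 0)"
    by (intro sum.cong) auto
  also have "\<dots> = (\<Sum>j\<in>\<iota> ` K. v $ j)"
    by (simp add: sum.If_cases)
  also have "\<dots> = (\<Sum>k\<in>K. coord v k)"
    using K bij_\<iota> inj_on_subset[of \<iota> "{1..n}" K] by (simp add: sum.reindex coord_def bij_betw_def)
  finally show ?thesis .
qed

lemma psum_Suc: "psum v (Suc k) = psum v k + coord v (Suc k)"
  by (simp add: psum_def)

lemma psum_indvec: "B \<subseteq> {1..n} \<Longrightarrow> k \<le> n \<Longrightarrow> psum (indvec \<iota> B) k = nb B k"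
  by (simp add: psum_def coord_indvec nb_def sum.If_cases Int_commute)

text \<open>A vector x of the hyperplane of total sum r is encoded by its slack sequence
  b k = x(1) + ... + x(k) - hgt P k, for 0 < k < n. At a vertex, b k \<in> {0,1} records whether the path
  of the basis has reached Q or is still on P after k steps.\<close>

definition clip :: "(nat \<Rightarrow> real) \<Rightarrow> nat \<Rightarrow> real" where
  "clip b k = (if 1 \<le> k \<and> k < n then b k else 0)"

definition point :: "(nat \<Rightarrow> real) \<Rightarrow> real ^ 'n" where
  "point b = (\<chi> j. let k = inv_into {1..n} \<iota> j in of_bool (north k) + clip b k - clip b (k - 1))"

definition slack :: "real ^ 'n \<Rightarrow> nat \<Rightarrow> real" where "slack v k = psum v k - hgt P k"

definition hyperplane :: "(real ^ 'n) set" where "hyperplane = {v. indvec \<iota> {1..n} \<bullet> v = r}"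

lemma coord_point: "k \<in> {1..n} \<Longrightarrow> coord (point b) k = of_bool (north k) + clip b k - clip b (k - 1)"
  using bij_\<iota> by (simp add: coord_def point_def bij_betw_def inv_into_f_f)

lemma psum_point: "k \<le> n \<Longrightarrow> psum (point b) k = hgt P k + clip b k"
proof (induction k)
  case 0
  then show ?case by (simp add: psum_def clip_def hgt_def)
next
  case (Suc k)
  then show ?case by (simp add: psum_def coord_point hgt_P_Suc clip_def)
qed

lemma hyperplane_iff: "v \<in> hyperplane \<longleftrightarrow> psum v n = r"
  by (simp add: hyperplane_def inner_indvec psum_def)

lemma point_in_hyperplane: "point b \<in> hyperplane"
  by (simp add: hyperplane_iff psum_point hgt_P_n clip_def)

lemma point_slack:
  assumes "v \<in> hyperplane"
  shows "point (slack v) = v"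
proof (rule vec_eq_if_coord_eq)
  fix k assume k: "k \<in> {1..n}"
  have clip_slack: "clip (slack v) j = psum v j - hgt P j" if "j \<le> n" for j
    using assms that hgt_P_n by (cases "j = 0") (auto simp: clip_def slack_def hyperplane_iff psum_def)
  have "psum v k = psum v (k - 1) + coord v k" "hgt P k = hgt P (k - 1) + of_bool (north k)"
    using k psum_Suc[of v "k - 1"] hgt_P_Suc[of "k - 1"] by auto
  moreover have "k \<le> n" "k - 1 \<le> n" using k by auto
  ultimately show "coord (point (slack v)) k = coord v k"
    using k clip_slack by (simp add: coord_point)
qed

lemma point_affine:
  assumes "\<alpha> + \<beta> = 1"
  shows "point (\<lambda>k. \<alpha> * b k + \<beta> * c k) = \<alpha> *\<^sub>R point b + \<beta> *\<^sub>R point c"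
proof (rule vec_eq_if_coord_eq)
  fix k assume k: "k \<in> {1..n}"
  have \<beta>: "\<beta> = 1 - \<alpha>" using assms by simp
  have clip: "clip (\<lambda>k. \<alpha> * b k + \<beta> * c k) j = \<alpha> * clip b j + \<beta> * clip c j" for j
    by (simp add: clip_def)
  have "coord (\<alpha> *\<^sub>R point b + \<beta> *\<^sub>R point c) k = \<alpha> * coord (point b) k + \<beta> * coord (point c) k"
    by (simp add: coord_def)
  also have "\<dots> = coord (point (\<lambda>k. \<alpha> * b k + \<beta> * c k)) k"
    using k by (simp add: coord_point clip) (simp add: \<beta> algebra_simps)
  finally show "coord (point (\<lambda>k. \<alpha> * b k + \<beta> * c k)) k = coord (\<alpha> *\<^sub>R point b + \<beta> *\<^sub>R point c) k"
    by simp
qed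

fun excess :: "slack_ineq \<Rightarrow> (nat \<Rightarrow> real) \<Rightarrow> real" where
  "excess (Lower q) b = - b q"
| "excess (Upper q) b = b q - 1"
| "excess (Fence k) b = (if north k then b k - b (k - 1) else b (k - 1) - b k)"

definition all_ineqs :: "slack_ineq set" where
  "all_ineqs = Lower ` {1..<n} \<union> Upper ` {1..<n} \<union> Fence ` {2..<n}"

definition admissible :: "(nat \<Rightarrow> real) \<Rightarrow> bool" where
  "admissible b \<longleftrightarrow> (\<forall>c\<in>all_ineqs. excess c b \<le> 0)"

lemma admissible_iff:
  "admissible b \<longleftrightarrow> (\<forall>k. 1 \<le> k \<and> k < n \<longrightarrow> 0 \<le> b k \<and> b k \<le> 1) \<and>
     (\<forall>k. 2 \<le> k \<and> k < n \<longrightarrow> (if north k then b k \<le> b (k - 1) else b (k - 1) \<le> b k))"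
  by (auto simp: admissible_def all_ineqs_def ball_Un)

lemma admissibleI:
  assumes "\<And>k. 1 \<le> k \<Longrightarrow> k < n \<Longrightarrow> 0 \<le> b k \<and> b k \<le> 1"
    and "\<And>k. 2 \<le> k \<Longrightarrow> k < n \<Longrightarrow> if north k then b k \<le> b (k - 1) else b (k - 1) \<le> b k"
  shows "admissible b"
  using assms unfolding admissible_iff by blast

lemma admissible_bounds: "admissible b \<Longrightarrow> 1 \<le> k \<Longrightarrow> k < n \<Longrightarrow> 0 \<le> b k \<and> b k \<le> 1"
  and admissible_fence:
    "admissible b \<Longrightarrow> 2 \<le> k \<Longrightarrow> k < n \<Longrightarrow> if north k then b k \<le> b (k - 1) else b (k - 1) \<le> b k"
  unfolding admissible_iff by blast+

text \<open>The fences force b q below both of its neighbours at a valley and above them at a peak.\<close>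
definition valley :: "nat \<Rightarrow> bool" where
  "valley q \<longleftrightarrow> 1 \<le> q \<and> q < n \<and> (2 \<le> q \<longrightarrow> north q) \<and> (q + 2 \<le> n \<longrightarrow> \<not> north (q + 1))"

definition peak :: "nat \<Rightarrow> bool" where
  "peak q \<longleftrightarrow> 1 \<le> q \<and> q < n \<and> (2 \<le> q \<longrightarrow> \<not> north q) \<and> (q + 2 \<le> n \<longrightarrow> north (q + 1))"

definition facet_ineqs :: "slack_ineq set" where
  "facet_ineqs = Lower ` Collect valley \<union> Upper ` Collect peak \<union> Fence ` {2..<n}"

lemma all_ineqs_cases:
  assumes "c \<in> all_ineqs"
  obtains (lower) q where "c = Lower q" "1 \<le> q" "q < n" | (upper) q where "c = Upper q" "1 \<le> q" "q < n"
    | (fence) k where "c = Fence k" "2 \<le> k" "k < n"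
  using assms by (auto simp: all_ineqs_def)

lemma facet_ineqs_subset: "facet_ineqs \<subseteq> all_ineqs"
  by (auto simp: facet_ineqs_def all_ineqs_def valley_def peak_def)

lemma admissible_if_facet_ineqs:
  assumes "\<And>c. c \<in> facet_ineqs \<Longrightarrow> excess c b \<le> 0"
  shows "admissible b"
proof -
  have fence: "if north k then b k \<le> b (k - 1) else b (k - 1) \<le> b k" if "2 \<le> k" "k < n" for k
    using assms[of "Fence k"] that by (auto simp: facet_ineqs_def split: if_splits)
  have valley_bound: "0 \<le> b q"
    if "1 \<le> q" "q < n" "2 \<le> q \<longrightarrow> north q" "q + 2 \<le> n \<longrightarrow> \<not> north (q + 1)" for q
    using assms[of "Lower q"] that by (auto simp: facet_ineqs_def valley_def)
  have peak_bound: "- 1 \<le> - b q"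
    if "1 \<le> q" "q < n" "2 \<le> q \<longrightarrow> \<not> north q" "q + 2 \<le> n \<longrightarrow> \<not> \<not> north (q + 1)" for q
    using assms[of "Upper q"] that by (auto simp: facet_ineqs_def peak_def)
  have reflected_fence: "if \<not> north k then - b k \<le> - b (k - 1) else - b (k - 1) \<le> - b k"
    if "2 \<le> k" "k < n" for k
    using fence[OF that] by auto
  have lower: "0 \<le> b k" if "1 \<le> k" "k < n" for k
    using fence_lower_bound[where down = north and b = b, OF fence valley_bound that] .
  have upper: "- 1 \<le> - b k" if "1 \<le> k" "k < n" for k
    using fence_lower_bound[where down = "\<lambda>k. \<not> north k" and b = "\<lambda>k. - b k",
        OF reflected_fence peak_bound that] .
  show ?thesis
    by (rule admissibleI[OF _ fence]) (use lower upper in force)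
qed

lemma facet_ineq_separable:
  assumes "c \<in> facet_ineqs"
  shows "\<exists>b. 0 < excess c b \<and> (\<forall>c'\<in>all_ineqs - {c}. excess c' b \<le> 0)"
proof -
  consider (lower) q where "c = Lower q" "valley q" | (upper) q where "c = Upper q" "peak q"
    | (fence) k where "c = Fence k" "2 \<le> k" "k < n"
    using assms by (auto simp: facet_ineqs_def)
  then show ?thesis
  proof cases
    case lower
    define b where "b j = (if j = q then - 1/2 else 1/2 :: real)" for j
    have "excess c' b \<le> 0" if "c' \<in> all_ineqs - {c}" for c'
      using that lower by (auto simp: all_ineqs_def valley_def b_def split: if_splits)
    moreover have "0 < excess c b" using lower by (simp add: b_def)
    ultimately show ?thesis by blast
  next
    case upper
    define b where "b j = (if j = q then 3/2 else 1/2 :: real)" for j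
    have "excess c' b \<le> 0" if "c' \<in> all_ineqs - {c}" for c'
      using that upper by (auto simp: all_ineqs_def peak_def b_def split: if_splits)
    moreover have "0 < excess c b" using upper by (simp add: b_def)
    ultimately show ?thesis by blast
  next
    case fence
    define b where "b j = (if north k then of_bool (k \<le> j) else of_bool (j < k) :: real)" for j
    have "excess c' b \<le> 0" if "c' \<in> all_ineqs - {c}" for c'
      using that fence by (auto simp: all_ineqs_def b_def split: if_splits)
    moreover have "\<not> k \<le> k - 1" using fence by simp
    then have "0 < excess c b" using fence by (simp add: b_def)
    ultimately show ?thesis by blast
  qed
qed

text \<open>The normalised difference between the numbers of East and North steps of P; it moves
  strictly in the direction prescribed by every fence.\<close>
definition balanced :: "nat \<Rightarrow> real" where
  "balanced k = (real n + real k - 2 * real (hgt P k)) / (2 * real n)"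

lemma excess_balanced:
  assumes "c \<in> all_ineqs"
  shows "excess c balanced < 0"
proof -
  have n: "0 < real n" using n_ge_2 by simp
  have range: "0 < balanced k \<and> balanced k < 1" if "1 \<le> k" "k < n" for k
    using hgt_le[of P k] that n by (simp add: balanced_def field_simps)
  have step: "balanced k - balanced (k - 1) = (1 - 2 * of_bool (north k)) / (2 * real n)"
    if "1 \<le> k" "k \<le> n" for k
  proof -
    have "hgt P k = hgt P (k - 1) + of_bool (north k)" "real (k - 1) = real k - 1"
      using hgt_P_Suc[of "k - 1"] that by auto
    then show ?thesis
      by (simp add: balanced_def diff_divide_distrib[symmetric] algebra_simps)
  qed
  from assms show ?thesis
  proof (cases rule: all_ineqs_cases)
    case (fence k)
    then have "excess c balanced = - 1 / (2 * real n)"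
      using step[of k] by (cases "north k") (auto simp: field_simps)
    then show ?thesis using n by simp
  qed (use range in auto)
qed

lemma admissible_slack_vertex:
  assumes "B \<in> bases lpm"
  shows "admissible (slack (indvec \<iota> B))"
proof -
  have sub: "B \<subseteq> {1..n}" and bounds: "\<And>k. 1 \<le> k \<Longrightarrow> k < n \<Longrightarrow> hgt P k \<le> nb B k \<and> nb B k \<le> hgt P k + 1"
    using assms by (auto simp: bases_lpm_iff)
  have slack: "slack (indvec \<iota> B) k = real (nb B k) - real (hgt P k)" if "k \<le> n" for k
    using sub that by (simp add: slack_def psum_indvec)
  have box: "0 \<le> slack (indvec \<iota> B) k \<and> slack (indvec \<iota> B) k \<le> 1" if "1 \<le> k" "k < n" for k
  proof -
    have "real (hgt P k) \<le> real (nb B k)" "real (nb B k) \<le> real (hgt P k) + 1"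
      using bounds[OF that] by simp_all
    then show ?thesis using slack[of k] that by simp
  qed
  have fence: "if north k then slack (indvec \<iota> B) k \<le> slack (indvec \<iota> B) (k - 1)
      else slack (indvec \<iota> B) (k - 1) \<le> slack (indvec \<iota> B) k" if "2 \<le> k" "k < n" for k
  proof -
    have "slack (indvec \<iota> B) k - slack (indvec \<iota> B) (k - 1) = of_bool (k \<in> B) - of_bool (north k)"
      using that slack[of k] slack[of "k - 1"] nb_Suc[of B "k - 1"] hgt_P_Suc[of "k - 1"] by simp
    then show ?thesis by (auto simp: of_bool_def split: if_splits)
  qed
  show ?thesis
    by (rule admissibleI[OF box fence])
qed

lemma point_in_vertices:
  assumes "admissible b" and b01: "\<And>k. 1 \<le> k \<Longrightarrow> k < n \<Longrightarrow> b k = 0 \<or> b k = 1"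
  shows "point b \<in> indvec \<iota> ` bases lpm"
proof -
  define B where "B = {k \<in> {1..n}. coord (point b) k = 1}"
  have "coord (point b) k = 0 \<or> coord (point b) k = 1" if k: "k \<in> {1..n}" for k
  proof -
    consider "k = 1" | "k = n" | "2 \<le> k" "k < n"
      using k by (cases "k = 1"; cases "k = n") auto
    then show ?thesis
    proof cases
      case 1
      then show ?thesis using b01[of 1] n_ge_2 not_north_1 by (simp add: coord_point clip_def)
    next
      case 2
      then show ?thesis using b01[of "n - 1"] n_ge_2 by (auto simp: coord_point clip_def)
    next
      case 3
      then show ?thesis
        using b01[of k] b01[of "k - 1"] admissible_fence[OF assms(1) 3]
        by (auto simp: coord_point clip_def split: if_splits)
    qed
  qed
  moreover have sub: "B \<subseteq> {1..n}" by (auto simp: B_def)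
  ultimately have point_eq: "point b = indvec \<iota> B"
    by (intro vec_eq_if_coord_eq) (auto simp: coord_indvec B_def)
  have nb: "real (nb B k) = hgt P k + clip b k" if "k \<le> n" for k
    using psum_indvec[OF sub that] psum_point[OF that, of b] point_eq by simp
  have "card B = r"
    using nb[of n] sub hgt_P_n by (simp add: nb_def Int_absorb2 clip_def)
  moreover have "hgt P k \<le> nb B k \<and> nb B k \<le> hgt P k + 1" if "1 \<le> k" "k < n" for k
  proof -
    have "real (hgt P k) \<le> real (nb B k) \<and> real (nb B k) \<le> real (hgt P k + 1)"
      using nb[of k] admissible_bounds[OF assms(1) that] that by (simp add: clip_def)
    then show ?thesis by (simp only: of_nat_le_iff)
  qed
  ultimately have "B \<in> bases lpm"
    using sub by (simp add: bases_lpm_iff)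
  then show ?thesis
    using point_eq by blast
qed

lemma admissible_positive_indicator:
  assumes "admissible b"
  shows "admissible (\<lambda>k. of_bool (0 < b k))"
  using assms by (auto simp: admissible_iff split: if_splits)

lemma admissible_remove_indicator:
  assumes "admissible b" and "0 < \<beta>" and "\<beta> < 1"
    and min: "\<And>k. 1 \<le> k \<Longrightarrow> k < n \<Longrightarrow> 0 < b k \<Longrightarrow> \<beta> \<le> b k"
  shows "admissible (\<lambda>k. (b k - \<beta> * of_bool (0 < b k)) / (1 - \<beta>))"
proof -
  define c where "c k = b k - \<beta> * of_bool (0 < b k)" for k
  have box: "0 \<le> c k \<and> c k \<le> 1 - \<beta>" if "1 \<le> k" "k < n" for k
    using admissible_bounds[OF assms(1) that] min[OF that] assms(3) by (auto simp: c_def)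
  have fence: "if north k then c k \<le> c (k - 1) else c (k - 1) \<le> c k" if "2 \<le> k" "k < n" for k
  proof -
    have "0 \<le> b k" "0 \<le> b (k - 1)" "if north k then b k \<le> b (k - 1) else b (k - 1) \<le> b k"
      using admissible_bounds[OF assms(1), of k] admissible_bounds[OF assms(1), of "k - 1"]
        admissible_fence[OF assms(1) that] that by auto
    moreover have "0 < b k \<Longrightarrow> \<beta> \<le> b k" "0 < b (k - 1) \<Longrightarrow> \<beta> \<le> b (k - 1)"
      using min[of k] min[of "k - 1"] that by auto
    ultimately show ?thesis by (auto simp: c_def split: if_splits)
  qed
  have "0 < 1 - \<beta>" using assms(3) by simp
  show ?thesis
    unfolding c_def[symmetric]
  proof (rule admissibleI)
    fix k assume "1 \<le> k" "k < n"
    then show "0 \<le> c k / (1 - \<beta>) \<and> c k / (1 - \<beta>) \<le> 1"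
      using box \<open>0 < 1 - \<beta>\<close> by simp
  next
    fix k assume k: "2 \<le> k" "k < n"
    show "if north k then c k / (1 - \<beta>) \<le> c (k - 1) / (1 - \<beta>) else c (k - 1) / (1 - \<beta>) \<le> c k / (1 - \<beta>)"
      using fence[OF k] \<open>0 < 1 - \<beta>\<close> by (cases "north k") (simp_all add: divide_right_mono)
  qed
qed

definition support :: "(nat \<Rightarrow> real) \<Rightarrow> nat set" where
  "support b = {k. 1 \<le> k \<and> k < n \<and> 0 < b k}"

lemma finite_support: "finite (support b)"
  by (rule finite_subset[of _ "{..<n}"]) (auto simp: support_def)

text \<open>Taking \<beta> the least positive value of b makes the support of b' strictly smaller.\<close>
lemma admissible_decompose:
  assumes "admissible b" and "k0 \<in> support b" and "b k0 < 1"
  obtains \<beta> b' where "0 < \<beta>" "\<beta> < 1" "admissible b'" "support b' \<subset> support b"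
    "b = (\<lambda>k. \<beta> * of_bool (0 < b k) + (1 - \<beta>) * b' k)"
proof -
  define \<beta> where "\<beta> = Min (b ` support b)"
  have "\<beta> \<in> b ` support b"
    unfolding \<beta>_def using finite_support assms(2) by (intro Min_in) auto
  then obtain k1 where k1: "k1 \<in> support b" "b k1 = \<beta>" by blast
  have \<beta>_le: "\<beta> \<le> b k" if "k \<in> support b" for k
    unfolding \<beta>_def using finite_support that by simp
  have "0 < \<beta>" "\<beta> < 1"
    using k1 \<beta>_le[OF assms(2)] assms(3) by (auto simp: support_def)
  define b' where "b' k = (b k - \<beta> * of_bool (0 < b k)) / (1 - \<beta>)" for k
  have "admissible b'"
    unfolding b'_def using assms(1) \<open>0 < \<beta>\<close> \<open>\<beta> < 1\<close> \<beta>_le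
    by (intro admissible_remove_indicator) (auto simp: support_def)
  moreover have "support b' \<subset> support b"
  proof -
    have "b' k \<le> 0" if "1 \<le> k" "k < n" "k \<notin> support b" for k
      using that assms(1) \<open>\<beta> < 1\<close> by (auto simp: b'_def support_def admissible_iff)
    then have "support b' \<subseteq> support b"
      by (force simp: support_def)
    moreover have "k1 \<notin> support b'"
      using k1(2) \<open>0 < \<beta>\<close> by (simp add: b'_def support_def)
    ultimately show ?thesis
      using k1(1) by blast
  qed
  moreover have "b = (\<lambda>k. \<beta> * of_bool (0 < b k) + (1 - \<beta>) * b' k)"
    using \<open>\<beta> < 1\<close> by (auto simp: b'_def)
  ultimately show ?thesis
    using that \<open>0 < \<beta>\<close> \<open>\<beta> < 1\<close> by blast
qed

lemma point_in_polytope: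
  assumes "admissible b"
  shows "point b \<in> polytope"
  using assms
proof (induction "card (support b)" arbitrary: b rule: less_induct)
  case less
  have vertices: "indvec \<iota> ` bases lpm \<subseteq> polytope"
    by (simp add: matroid_polytope_def hull_subset)
  show ?case
  proof (cases "\<forall>k. 1 \<le> k \<and> k < n \<longrightarrow> b k = 0 \<or> b k = 1")
    case True
    then show ?thesis using point_in_vertices[OF less.prems] vertices by auto
  next
    case False
    then obtain k0 where "k0 \<in> support b" "b k0 < 1"
      using less.prems by (force simp: support_def admissible_iff)
    with less.prems obtain \<beta> b' where \<beta>: "0 < \<beta>" "\<beta> < 1" and "admissible b'"
      and "support b' \<subset> support b" and b_eq: "b = (\<lambda>k. \<beta> * of_bool (0 < b k) + (1 - \<beta>) * b' k)"
      by (rule admissible_decompose)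
    then have "point b' \<in> polytope"
      using less.hyps finite_support psubset_card_mono by blast
    moreover have "point (\<lambda>k. of_bool (0 < b k)) \<in> polytope"
      using point_in_vertices[OF admissible_positive_indicator[OF less.prems]] vertices by auto
    moreover have "point b = \<beta> *\<^sub>R point (\<lambda>k. of_bool (0 < b k)) + (1 - \<beta>) *\<^sub>R point b'"
    proof -
      have "point b = point (\<lambda>k. \<beta> * of_bool (0 < b k) + (1 - \<beta>) * b' k)"
        using b_eq by (rule arg_cong)
      also have "\<dots> = \<beta> *\<^sub>R point (\<lambda>k. of_bool (0 < b k)) + (1 - \<beta>) *\<^sub>R point b'"
        by (rule point_affine) simp
      finally show ?thesis .
    qed
    moreover have "convex polytope"
      by (simp add: matroid_polytope_def)
    ultimately show ?thesis
      using \<beta> by (simp add: convexD)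
  qed
qed

section \<open>The facet inequalities\<close>

definition del_idx :: "nat set" where "del_idx = {k \<in> {1..n}. Rword P Q k = E}"

definition con_idx :: "nat set" where "con_idx = {k \<in> {1..n}. Rword P Q k = N}"

definition sum_idx :: "nat set" where "sum_idx = {k \<in> {1..<n}. Rword P Q k \<noteq> Rword P Q (k + 1)}"

definition facet_idx :: "(nat + nat + nat) set" where
  "facet_idx = del_idx <+> (con_idx <+> sum_idx)"

lemma Rword_first: "Rword P Q 1 = N \<longleftrightarrow> n = 2 \<or> north 2"
  by (simp add: Rword_def Let_def length_P north_def)

lemma Rword_last: "Rword P Q n = N \<longleftrightarrow> n = 2 \<or> north (n - 1)"
proof -
  have "n - 2 = n - 1 - 1" by simp
  then show ?thesis using n_ge_2 by (simp add: Rword_def Let_def length_P north_def)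
qed

lemma Rword_n_eq_2: "n = 2 \<Longrightarrow> Rword P Q k = N"
  by (simp add: Rword_def Let_def length_P)

lemma Rword_mid: "2 \<le> k \<Longrightarrow> k < n \<Longrightarrow> Rword P Q k = N \<longleftrightarrow> north k"
  by (simp add: Rword_def Let_def length_P north_def)

lemma sum_idx_iff: "k \<in> sum_idx \<longleftrightarrow> 2 \<le> k \<and> k + 2 \<le> n \<and> north k \<noteq> north (k + 1)"
proof -
  have sum_iff: "k \<in> sum_idx \<longleftrightarrow> 1 \<le> k \<and> k < n \<and> (Rword P Q k = N) \<noteq> (Rword P Q (k + 1) = N)"
    by (cases "Rword P Q k"; cases "Rword P Q (k + 1)") (auto simp: sum_idx_def)
  consider "k < 1 \<or> n \<le> k" | "k = 1" "n = 2" | "k = 1" "3 \<le> n" | "k + 1 = n" "2 \<le> k"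
    | "2 \<le> k" "k + 2 \<le> n"
    using n_ge_2 by linarith
  then show ?thesis
  proof cases
    case 3
    then show ?thesis using sum_iff Rword_first Rword_mid[of 2] by (simp add: numeral_2_eq_2)
  next
    case 4
    then have "n - 1 = k" by simp
    then show ?thesis using 4 sum_iff Rword_last Rword_mid[of k] by auto
  next
    case 5
    then show ?thesis using sum_iff Rword_mid[of k] Rword_mid[of "k + 1"] by simp
  qed (use sum_iff Rword_n_eq_2 in auto)
qed

lemma facet_idx_cases:
  assumes "i \<in> facet_idx"
  obtains (del) k where "i = Inl k" "1 \<le> k" "k \<le> n" "k = 1 \<longrightarrow> n \<noteq> 2 \<and> \<not> north 2"
      "k = n \<longrightarrow> n \<noteq> 2 \<and> \<not> north (n - 1)" "2 \<le> k \<and> k < n \<longrightarrow> \<not> north k"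
  | (con) k where "i = Inr (Inl k)" "1 \<le> k" "k \<le> n" "k = 1 \<longrightarrow> n = 2 \<or> north 2"
      "k = n \<longrightarrow> n = 2 \<or> north (n - 1)" "2 \<le> k \<and> k < n \<longrightarrow> north k"
  | (sum) k where "i = Inr (Inr k)" "2 \<le> k" "k + 2 \<le> n" "north k \<noteq> north (k + 1)"
proof -
  consider (Inl) k where "i = Inl k" "k \<in> del_idx" | (Inr_Inl) k where "i = Inr (Inl k)" "k \<in> con_idx"
    | (Inr_Inr) k where "i = Inr (Inr k)" "k \<in> sum_idx"
    using assms by (auto simp: facet_idx_def)
  then show ?thesis
  proof cases
    case Inl
    then have "1 \<le> k" "k \<le> n" "Rword P Q k \<noteq> N"
      by (auto simp: del_idx_def step_neq_N_iff)
    then show ?thesis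
      using that(1) Inl(1) Rword_first Rword_last Rword_mid[of k] by auto
  next
    case Inr_Inl
    then have "1 \<le> k" "k \<le> n" "Rword P Q k = N"
      by (auto simp: con_idx_def)
    then show ?thesis
      using that(2) Inr_Inl(1) Rword_first Rword_last Rword_mid[of k] by auto
  next
    case Inr_Inr
    then show ?thesis using that(3) by (simp add: sum_idx_iff)
  qed
qed

text \<open>Facet inequalities of the polytope: x k \<ge> 0 (deletion), x k \<le> 1 (contraction), and a bound on
  x 1 + ... + x k forcing the path through the outside corner after k steps (direct sum).\<close>
definition normal :: "nat + nat + nat \<Rightarrow> real ^ 'n" where
  "normal i = (case i of
      Inl k \<Rightarrow> - indvec \<iota> {k}
    | Inr (Inl k) \<Rightarrow> indvec \<iota> {k}
    | Inr (Inr k) \<Rightarrow> if north k then - indvec \<iota> {1..k} else indvec \<iota> {1..k})"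

definition offset :: "nat + nat + nat \<Rightarrow> real" where
  "offset i = (case i of
      Inl k \<Rightarrow> 0
    | Inr (Inl k) \<Rightarrow> 1
    | Inr (Inr k) \<Rightarrow> if north k then - real (hgt P k) else real (hgt P k) + 1)"

definition ineq_of :: "nat + nat + nat \<Rightarrow> slack_ineq" where
  "ineq_of i = (case i of
      Inl k \<Rightarrow> if k = 1 then Lower 1 else if k = n then Upper (n - 1) else Fence k
    | Inr (Inl k) \<Rightarrow> if k = 1 then Upper 1 else if k = n then Lower (n - 1) else Fence k
    | Inr (Inr k) \<Rightarrow> if north k then Lower k else Upper k)"

lemma normal_point:
  assumes "i \<in> facet_idx"
  shows "normal i \<bullet> point b = offset i + excess (ineq_of i) b"
  using assms
proof (cases rule: facet_idx_cases)
  case (del k)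
  then show ?thesis
    using n_ge_2 not_north_1
    by (auto simp: normal_def offset_def ineq_of_def inner_indvec coord_point clip_def)
next
  case (con k)
  then show ?thesis
    using n_ge_2 not_north_1
    by (auto simp: normal_def offset_def ineq_of_def inner_indvec coord_point clip_def)
next
  case (sum k)
  then have "indvec \<iota> {1..k} \<bullet> point b = hgt P k + b k"
    using inner_indvec[of "{1..k}"] psum_point[of k b] by (simp add: psum_def clip_def)
  then show ?thesis
    using sum by (simp add: normal_def offset_def ineq_of_def)
qed

definition idx_of :: "slack_ineq \<Rightarrow> nat + nat + nat" where
  "idx_of c = (case c of
      Fence k \<Rightarrow> if north k then Inr (Inl k) else Inl k
    | Lower q \<Rightarrow> if q + 1 = n then Inr (Inl n) else if q = 1 then Inl 1 else Inr (Inr q)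
    | Upper q \<Rightarrow> if q = 1 then Inr (Inl 1) else if q + 1 = n then Inl n else Inr (Inr q))"

lemma endpoint_cases:
  assumes "1 \<le> k" and "k \<le> n"
  obtains "k = 1" | "k = n" "k \<noteq> 1" | "2 \<le> k" "k < n"
  using assms by linarith

lemma ineq_of_in_facet_ineqs:
  assumes "i \<in> facet_idx"
  shows "ineq_of i \<in> facet_ineqs \<and> idx_of (ineq_of i) = i"
  using assms
proof (cases rule: facet_idx_cases)
  case (del k)
  from del(2,3) show ?thesis
  proof (cases rule: endpoint_cases)
    case 1
    then have "valley 1" using del n_ge_2 by (simp add: valley_def numeral_2_eq_2)
    then show ?thesis using del 1 by (simp add: ineq_of_def idx_of_def facet_ineqs_def)
  next
    case 2
    then have "peak (n - 1)" "n - 1 \<noteq> 1" using del by (auto simp: peak_def)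
    then show ?thesis using del 2 n_ge_2 by (simp add: ineq_of_def idx_of_def facet_ineqs_def)
  qed (use del in \<open>simp add: ineq_of_def idx_of_def facet_ineqs_def\<close>)
next
  case (con k)
  from con(2,3) show ?thesis
  proof (cases rule: endpoint_cases)
    case 1
    then have "peak 1" using con n_ge_2 by (auto simp: peak_def numeral_2_eq_2)
    then show ?thesis using con 1 by (simp add: ineq_of_def idx_of_def facet_ineqs_def)
  next
    case 2
    then have "valley (n - 1)" using con n_ge_2 by (auto simp: valley_def)
    then show ?thesis using con 2 n_ge_2 by (simp add: ineq_of_def idx_of_def facet_ineqs_def)
  qed (use con in \<open>simp add: ineq_of_def idx_of_def facet_ineqs_def\<close>)
next
  case (sum k)
  then show ?thesis
    by (auto simp: ineq_of_def idx_of_def facet_ineqs_def valley_def peak_def)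
qed

lemma Inl_mem_facet_idx: "1 \<le> k \<Longrightarrow> k \<le> n \<Longrightarrow> Rword P Q k \<noteq> N \<Longrightarrow> Inl k \<in> facet_idx"
  and Inr_Inl_mem_facet_idx: "1 \<le> k \<Longrightarrow> k \<le> n \<Longrightarrow> Rword P Q k = N \<Longrightarrow> Inr (Inl k) \<in> facet_idx"
  and Inr_Inr_mem_facet_idx: "2 \<le> k \<Longrightarrow> k + 2 \<le> n \<Longrightarrow> north k \<noteq> north (k + 1) \<Longrightarrow> Inr (Inr k) \<in> facet_idx"
  by (auto simp: facet_idx_def del_idx_def con_idx_def sum_idx_iff step_neq_N_iff)

lemma idx_of_Lower:
  assumes "valley q"
  shows "idx_of (Lower q) \<in> facet_idx \<and> ineq_of (idx_of (Lower q)) = Lower q"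
proof -
  consider "q + 1 = n" | "q = 1" "q + 1 \<noteq> n" | "2 \<le> q" "q + 2 \<le> n"
    using assms by (cases "q + 1 = n"; cases "q = 1") (auto simp: valley_def)
  then show ?thesis
  proof cases
    case 1
    then have "n - 1 = q" by simp
    then have "Rword P Q n = N" using assms Rword_last by (auto simp: valley_def)
    then show ?thesis
      using Inr_Inl_mem_facet_idx[of n] 1 \<open>n - 1 = q\<close> n_ge_2 by (simp add: ineq_of_def idx_of_def)
  next
    case 2
    then have "Rword P Q 1 \<noteq> N" using assms Rword_first by (auto simp: valley_def numeral_2_eq_2)
    then show ?thesis
      using Inl_mem_facet_idx[of 1] 2 n_ge_2 by (simp add: ineq_of_def idx_of_def)
  next
    case 3
    then show ?thesis
      using Inr_Inr_mem_facet_idx[of q] assms by (auto simp: ineq_of_def idx_of_def valley_def)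
  qed
qed

lemma idx_of_Upper:
  assumes "peak q"
  shows "idx_of (Upper q) \<in> facet_idx \<and> ineq_of (idx_of (Upper q)) = Upper q"
proof -
  consider "q = 1" | "q + 1 = n" "q \<noteq> 1" | "2 \<le> q" "q + 2 \<le> n"
    using assms by (cases "q + 1 = n"; cases "q = 1") (auto simp: peak_def)
  then show ?thesis
  proof cases
    case 1
    then have "Rword P Q 1 = N"
      using assms Rword_first Rword_n_eq_2 by (auto simp: peak_def numeral_2_eq_2)
    then show ?thesis
      using Inr_Inl_mem_facet_idx[of 1] 1 n_ge_2 by (simp add: ineq_of_def idx_of_def)
  next
    case 2
    then have "n - 1 = q" by simp
    then have "Rword P Q n \<noteq> N" using assms 2 Rword_last by (auto simp: peak_def)
    then show ?thesis
      using Inl_mem_facet_idx[of n] 2 \<open>n - 1 = q\<close> n_ge_2 by (simp add: ineq_of_def idx_of_def)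
  next
    case 3
    then show ?thesis
      using Inr_Inr_mem_facet_idx[of q] assms by (auto simp: ineq_of_def idx_of_def peak_def)
  qed
qed

lemma idx_of_in_facet_idx:
  assumes "c \<in> facet_ineqs"
  shows "idx_of c \<in> facet_idx \<and> ineq_of (idx_of c) = c"
proof -
  have "idx_of (Fence k) \<in> facet_idx \<and> ineq_of (idx_of (Fence k)) = Fence k" if "2 \<le> k" "k < n" for k
    using Inl_mem_facet_idx[of k] Inr_Inl_mem_facet_idx[of k] Rword_mid[OF that] that
    by (simp add: ineq_of_def idx_of_def)
  then show ?thesis
    using assms idx_of_Lower idx_of_Upper by (auto simp: facet_ineqs_def)
qed

lemma bij_betw_ineq_of: "bij_betw ineq_of facet_idx facet_ineqs"
  by (rule bij_betw_byWitness[where f' = idx_of])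
    (use ineq_of_in_facet_ineqs idx_of_in_facet_idx in auto)

lemma polytope_eq: "polytope = hyperplane \<inter> {v. \<forall>i\<in>facet_idx. normal i \<bullet> v \<le> offset i}"
proof
  have "indvec \<iota> B \<in> hyperplane \<inter> {v. \<forall>i\<in>facet_idx. normal i \<bullet> v \<le> offset i}"
    if B: "B \<in> bases lpm" for B
  proof -
    have "indvec \<iota> B \<in> hyperplane"
      using B psum_indvec[of B n] by (simp add: hyperplane_iff bases_lpm_iff nb_def Int_absorb2)
    then have "point (slack (indvec \<iota> B)) = indvec \<iota> B"
      by (rule point_slack)
    moreover have "excess (ineq_of i) (slack (indvec \<iota> B)) \<le> 0" if "i \<in> facet_idx" for i
      using admissible_slack_vertex[OF B] ineq_of_in_facet_ineqs[OF that] facet_ineqs_subset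
      by (auto simp: admissible_def)
    ultimately show ?thesis
      using \<open>indvec \<iota> B \<in> hyperplane\<close> normal_point[of _ "slack (indvec \<iota> B)"] by fastforce
  qed
  moreover have "convex (hyperplane \<inter> {v. \<forall>i\<in>facet_idx. normal i \<bullet> v \<le> offset i})"
  proof -
    have "{v. \<forall>i\<in>facet_idx. normal i \<bullet> v \<le> offset i} = (\<Inter>i\<in>facet_idx. {v. normal i \<bullet> v \<le> offset i})"
      by auto
    then show ?thesis
      by (simp add: hyperplane_def convex_Int convex_hyperplane convex_INT convex_halfspace_le)
  qed
  ultimately show "polytope \<subseteq> hyperplane \<inter> {v. \<forall>i\<in>facet_idx. normal i \<bullet> v \<le> offset i}"
    unfolding matroid_polytope_def by (intro hull_minimal) auto
next
  show "hyperplane \<inter> {v. \<forall>i\<in>facet_idx. normal i \<bullet> v \<le> offset i} \<subseteq> polytope"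
  proof
    fix v assume v: "v \<in> hyperplane \<inter> {v. \<forall>i\<in>facet_idx. normal i \<bullet> v \<le> offset i}"
    have "excess c (slack v) \<le> 0" if "c \<in> facet_ineqs" for c
    proof -
      have "c \<in> ineq_of ` facet_idx"
        using bij_betw_ineq_of that by (simp add: bij_betw_def)
      then obtain i where "i \<in> facet_idx" "c = ineq_of i"
        by blast
      then show ?thesis
        using v normal_point[of i "slack v"] point_slack[of v] by auto
    qed
    then have "point (slack v) \<in> polytope"
      by (intro point_in_polytope admissible_if_facet_ineqs)
    then show "v \<in> polytope"
      using v point_slack by auto
  qed
qed

section \<open>Facets and the matroids they correspond to\<close>

definition face :: "nat + nat + nat \<Rightarrow> (real ^ 'n) set" where
  "face i = polytope \<inter> {x. normal i \<bullet> x = offset i}"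

theorem bij_betw_face_facets: "bij_betw face facet_idx {F. F facet_of polytope}"
  unfolding face_def
proof (rule facets_of_irredundant_polyhedron)
  show "finite facet_idx"
    by (simp add: facet_idx_def del_idx_def con_idx_def sum_idx_def)
  show "affine hyperplane"
    by (simp add: hyperplane_def affine_hyperplane)
  show "polytope = hyperplane \<inter> {x. \<forall>i\<in>facet_idx. normal i \<bullet> x \<le> offset i}"
    by (rule polytope_eq)
  show "point balanced \<in> hyperplane"
    by (rule point_in_hyperplane)
  show "normal i \<bullet> point balanced < offset i" if "i \<in> facet_idx" for i
    using normal_point[OF that] excess_balanced ineq_of_in_facet_ineqs[OF that] facet_ineqs_subset
    by fastforce
  show "\<exists>y\<in>hyperplane. offset i < normal i \<bullet> y \<and> (\<forall>j\<in>facet_idx. j \<noteq> i \<longrightarrow> normal j \<bullet> y \<le> offset j)"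
    if i: "i \<in> facet_idx" for i
  proof -
    obtain b where b: "0 < excess (ineq_of i) b" "\<forall>c\<in>all_ineqs - {ineq_of i}. excess c b \<le> 0"
      using facet_ineq_separable ineq_of_in_facet_ineqs[OF i] by blast
    have "normal j \<bullet> point b \<le> offset j" if "j \<in> facet_idx" "j \<noteq> i" for j
    proof -
      have "ineq_of j \<noteq> ineq_of i"
        using bij_betw_ineq_of that i by (auto simp: bij_betw_def inj_on_def)
      then show ?thesis
        using b(2) normal_point[OF that(1)] ineq_of_in_facet_ineqs[OF that(1)] facet_ineqs_subset by force
    qed
    moreover have "offset i < normal i \<bullet> point b"
      using b(1) normal_point[OF i] by simp
    ultimately show ?thesis
      using point_in_hyperplane by blast
  qed
qed

lemma face_eq_convex_hull:
  assumes "i \<in> facet_idx"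
  shows "face i = convex hull (indvec \<iota> ` {B \<in> bases lpm. normal i \<bullet> indvec \<iota> B = offset i})"
proof -
  have "normal i \<bullet> v \<le> offset i" if "v \<in> indvec \<iota> ` bases lpm" for v
    using that assms polytope_eq hull_subset[of "indvec \<iota> ` bases lpm" convex]
    by (auto simp: matroid_polytope_def)
  then have "face i = convex hull (indvec \<iota> ` bases lpm \<inter> {x. normal i \<bullet> x = offset i})"
    unfolding face_def matroid_polytope_def
    by (intro convex_hull_Int_supporting_hyperplane) (auto simp: finite_bases_lpm)
  also have "indvec \<iota> ` bases lpm \<inter> {x. normal i \<bullet> x = offset i} =
      indvec \<iota> ` {B \<in> bases lpm. normal i \<bullet> indvec \<iota> B = offset i}"
    by auto
  finally show ?thesis .
qed

lemma face_con_idx: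
  assumes "k \<in> con_idx"
  shows "face (Inr (Inl k)) = convex hull (indvec \<iota> ` {B \<in> bases lpm. k \<in> B})"
proof -
  have k: "k \<in> {1..n}" using assms by (simp add: con_idx_def)
  have "normal (Inr (Inl k)) \<bullet> indvec \<iota> B = offset (Inr (Inl k)) \<longleftrightarrow> k \<in> B" if "B \<in> bases lpm" for B
  proof -
    have "indvec \<iota> {k} \<bullet> indvec \<iota> B = of_bool (k \<in> B)"
      using inner_indvec[of "{k}" "indvec \<iota> B"] coord_indvec[of B k] k that by (simp add: bases_lpm_iff)
    then show ?thesis by (simp add: normal_def offset_def)
  qed
  moreover have "Inr (Inl k) \<in> facet_idx"
    using assms by (auto simp: facet_idx_def)
  ultimately show ?thesis
    by (simp add: face_eq_convex_hull cong: conj_cong)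
qed

definition corner :: "nat \<Rightarrow> nat \<times> nat" where
  "corner k = (if north k then pt P k else pt Q k)"

lemma face_sum_idx:
  assumes "k \<in> sum_idx"
  shows "face (Inr (Inr k)) = convex hull (indvec \<iota> ` {B \<in> bases lpm. nb B k = snd (corner k)})"
proof -
  have k: "2 \<le> k" "k + 2 \<le> n" using assms by (auto simp: sum_idx_iff)
  have "normal (Inr (Inr k)) \<bullet> indvec \<iota> B = offset (Inr (Inr k)) \<longleftrightarrow> nb B k = snd (corner k)"
    if "B \<in> bases lpm" for B
  proof -
    have "indvec \<iota> {1..k} \<bullet> indvec \<iota> B = nb B k"
      using that k inner_indvec[of "{1..k}"] psum_indvec[of B k] by (simp add: bases_lpm_iff psum_def)
    then show ?thesis
      using hgt_Q[of k] k by (auto simp: normal_def offset_def corner_def pt_def)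
  qed
  moreover have "Inr (Inr k) \<in> facet_idx"
    using assms by (auto simp: facet_idx_def)
  ultimately show ?thesis
    by (simp add: face_eq_convex_hull cong: conj_cong)
qed

lemma the_outside_corner:
  assumes "k \<in> sum_idx"
  shows "(THE c. c \<in> outside_corners P Q \<and> fst c + snd c = k) = corner k"
proof -
  have k: "2 \<le> k" "k + 2 \<le> n" "north k \<noteq> north (k + 1)" using assms by (auto simp: sum_idx_iff)
  have "Q ! (k - 1) = P ! (k - 1)" "Q ! k = P ! k"
    using Q_nth_eq_P_nth[of "k - 1"] Q_nth_eq_P_nth[of k] k by auto
  then have "c \<in> outside_corners P Q \<and> fst c + snd c = k \<longleftrightarrow> c = corner k" for c
    using k length_P length_Q pt_sum[of P k] pt_sum[of Q k]
    by (auto simp: outside_corners_def corner_def north_def pt_sum step_neq_N_iff)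
  then show ?thesis by blast
qed

lemma bases_i_dsum:
  assumes "k \<in> sum_idx"
  shows "bases (i_dsum m r P Q k) = {B \<in> bases lpm. nb B k = snd (corner k)}"
proof -
  have k: "2 \<le> k" "k + 2 \<le> n" using assms by (auto simp: sum_idx_iff)
  have "corner k = (k - snd (corner k), snd (corner k))"
    by (simp add: corner_def pt_def)
  moreover have "snd (corner k) \<le> hgt Q k" "snd (corner k) \<le> k"
    using hgt_Q[of k] hgt_le[of Q k] k by (auto simp: corner_def pt_def)
  ultimately show ?thesis
    using bases_corner_dsum[OF lpath_P lpath_Q, of k "snd (corner k)"] k
    by (simp add: i_dsum_def the_outside_corner[OF assms])
qed

lemma face_nonempty: "i \<in> facet_idx \<Longrightarrow> face i \<noteq> {}"
  using bij_betw_face_facets by (auto simp: bij_betw_def facet_of_def)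

lemma inj_on_face: "inj_on face facet_idx"
  using bij_betw_face_facets by (simp add: bij_betw_def)

lemma inj_on_deletion: "inj_on (deletion lpm) del_idx"
proof (rule inj_onI)
  fix i j assume ij: "i \<in> del_idx" "j \<in> del_idx" and "deletion lpm i = deletion lpm j"
  then have "ground (deletion lpm i) = ground (deletion lpm j)" by simp
  then have "{1..n} - {i} = {1..n} - {j}"
    by (simp add: deletion_def restrict_def ground_def LPM_def)
  moreover have "i \<in> {1..n}" using ij by (simp add: del_idx_def)
  ultimately show "i = j" by blast
qed

lemma inj_on_contraction: "inj_on (contraction lpm) con_idx"
proof (rule inj_onI)
  fix i j assume ij: "i \<in> con_idx" "j \<in> con_idx" and eq: "contraction lpm i = contraction lpm j"
  have "bases (contraction lpm k) = {B \<in> bases lpm. k \<in> B}" if k: "k \<in> con_idx" for k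
  proof -
    have "face (Inr (Inl k)) \<noteq> {}"
      using k by (intro face_nonempty) (auto simp: facet_idx_def)
    then obtain B0 where "B0 \<in> bases lpm" "k \<in> B0"
      using face_con_idx[OF k] by auto
    then show ?thesis by (rule bases_contraction[OF finite_bases_lpm])
  qed
  moreover have "bases (contraction lpm i) = bases (contraction lpm j)"
    using eq by simp
  ultimately have "{B \<in> bases lpm. i \<in> B} = {B \<in> bases lpm. j \<in> B}"
    using ij by simp
  then have "face (Inr (Inl i)) = face (Inr (Inl j))"
    using face_con_idx ij by simp
  moreover have "Inr (Inl i) \<in> facet_idx" "Inr (Inl j) \<in> facet_idx"
    using ij by (auto simp: facet_idx_def)
  ultimately show "i = j"
    using inj_on_face by (auto dest: inj_onD)
qed

lemma inj_on_i_dsum: "inj_on (i_dsum m r P Q) sum_idx"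
proof (rule inj_onI)
  fix i j assume ij: "i \<in> sum_idx" "j \<in> sum_idx" and "i_dsum m r P Q i = i_dsum m r P Q j"
  then have "bases (i_dsum m r P Q i) = bases (i_dsum m r P Q j)" by simp
  then have "{B \<in> bases lpm. nb B i = snd (corner i)} = {B \<in> bases lpm. nb B j = snd (corner j)}"
    by (simp add: bases_i_dsum ij)
  then have "face (Inr (Inr i)) = face (Inr (Inr j))"
    using face_sum_idx ij by simp
  moreover have "Inr (Inr i) \<in> facet_idx" "Inr (Inr j) \<in> facet_idx"
    using ij by (auto simp: facet_idx_def)
  ultimately show "i = j"
    using inj_on_face by (auto dest: inj_onD)
qed

lemma card_facets:
  "card {F. F facet_of polytope} = card (Dset m r P Q <+> (Cset m r P Q <+> Sset m r P Q))"
proof -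
  have fin: "finite del_idx" "finite con_idx" "finite sum_idx"
    by (simp_all add: del_idx_def con_idx_def sum_idx_def)
  have "Dset m r P Q = deletion lpm ` del_idx" "Cset m r P Q = contraction lpm ` con_idx"
    "Sset m r P Q = i_dsum m r P Q ` sum_idx"
    unfolding Dset_def Cset_def Sset_def del_idx_def con_idx_def sum_idx_def
    by (simp_all only: setcompr_eq_image)
  then have "card (Dset m r P Q <+> (Cset m r P Q <+> Sset m r P Q)) = card facet_idx"
    using fin inj_on_deletion inj_on_contraction inj_on_i_dsum
    by (simp add: card_Plus card_image facet_idx_def)
  then show ?thesis
    using bij_betw_same_card[OF bij_betw_face_facets] by simp
qed

end

theorem lemma4p3:
  fixes m r :: nat and P Q :: "step list" and \<iota> :: "nat \<Rightarrow> 'n::finite"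
  assumes "lpath m r P" and "lpath m r Q"
    and "never_above P Q"
    and "border_strip P Q"
    and "bij_betw \<iota> {1..m+r} (UNIV :: 'n set)"
  shows "\<exists>f. bij_betw f {F. F facet_of matroid_polytope \<iota> (LPM m r P Q)}
              (Dset m r P Q <+> (Cset m r P Q <+> Sset m r P Q))"
proof -
  interpret border_strip_lpm m r P Q \<iota>
    using assms by unfold_locales
  have "finite facet_idx"
    by (simp add: facet_idx_def del_idx_def con_idx_def sum_idx_def)
  then have "finite {F. F facet_of polytope}"
    using bij_betw_finite bij_betw_face_facets by blast
  moreover have "finite (Dset m r P Q <+> (Cset m r P Q <+> Sset m r P Q))"
    by (simp add: Dset_def Cset_def Sset_def)
  ultimately show ?thesis
    using card_facets by (simp only: bij_betw_iff_card)
qed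

end
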